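(* Let $X$ be a path-connected topological space, $Y\subset X$ a discrete subset, $b\in Y$, $G$ a group, and for each $y\in Y$ let $s_y$ be a path from $b$ to $y$, with $s_b$ constant. For $z\in Z^1(X,b)$, the cohomology class in $H^1(X,Y)$ of $\varepsilon_s(z)\bullet z$ depends only on the family $s=(s_y)$ and on the cohomology class of $z$ in $H^1(X,b)$.
   Context: Conventions: a path in $W$ is a continuous map $[0,1]\to W$; $P(W)$ is the set of paths; $p\cdot q$ is concatenation; homotopies of paths are relative to $\{0,1\}$. $G$ has unit $1$. For $Y\subset W$: a $0$-cochain of $(W,Y)$ is $c\colon W\to G$ with $c|_Y=1$; these form a group $C^0(W,Y)$ under pointwise multiplication, and act on maps $u\colon P(W)\to G$ by $(c\bullet u)(p)=c(p(0))u(p)c(p(1))^{-1}$. A $1$-cochain of $(W,Y)$ is $u\colon P(W)\to G$ with $u(p)=1$ for paths with image in $Y$; a cocycle satisfies $u(p)=u(q)$ for homotopic $p,q$ and $u(p\cdot q)=u(p)u(q)$ when defined; $Z^1(W,Y)$ is the set of cocycles and $H^1(W,Y)$ the set of $C^0(W,Y)$-orbits; $(W,b)=(W,\{b\})$. $C^0(Y,b)$ (maps $Y\to G$ equal to $1$ at $b$) is identified with the subgroup of $C^0(X,b)$ of cochains equal to $1$ on $X\setminus Y$. For $z\in Z^1(X,b)$, $\varepsilon_s(z)\in C^0(Y,b)$ is $y\mapsto z(s_y)$. (Since $Y$ is discrete, $\varepsilon_s(z)\bullet z\in Z^1(X,Y)$.) *)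

theory Defs
  imports "HOL-Analysis.Analysis"
begin

text \<open>The group G is a type of class group_add (not necessarily commutative),
written additively: unit 0, product +, inverse uminus.\<close>

definition path_in :: "'a::topological_space set \<Rightarrow> (real \<Rightarrow> 'a) \<Rightarrow> bool" where
  "path_in W p \<longleftrightarrow> path p \<and> path_image p \<subseteq> W"

text \<open>0-cochains of (W,Y): maps c with c = 1 on Y (values off W irrelevant).\<close>
definition cochain0 :: "'a set \<Rightarrow> ('a \<Rightarrow> 'g::group_add) set" where
  "cochain0 Y = {c. \<forall>y\<in>Y. c y = 0}"

definition cact :: "('a \<Rightarrow> 'g::group_add) \<Rightarrow> ((real \<Rightarrow> 'a) \<Rightarrow> 'g) \<Rightarrow> (real \<Rightarrow> 'a) \<Rightarrow> 'g" where
  "cact c u = (\<lambda>p. c (p 0) + u p + - c (p 1))"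

definition cocycle1 :: "'a::topological_space set \<Rightarrow> 'a set \<Rightarrow> ((real \<Rightarrow> 'a) \<Rightarrow> 'g::group_add) \<Rightarrow> bool" where
  "cocycle1 W Y u \<longleftrightarrow>
     (\<forall>p. path_in Y p \<longrightarrow> u p = 0) \<and>
     (\<forall>p q. homotopic_paths W p q \<longrightarrow> u p = u q) \<and>
     (\<forall>p q. path_in W p \<and> path_in W q \<and> pathfinish p = pathstart q \<longrightarrow> u (p +++ q) = u p + u q)"

definition cohomologous :: "'a::topological_space set \<Rightarrow> 'a set \<Rightarrow> ((real \<Rightarrow> 'a) \<Rightarrow> 'g::group_add) \<Rightarrow> ((real \<Rightarrow> 'a) \<Rightarrow> 'g) \<Rightarrow> bool" where
  "cohomologous W Y u v \<longleftrightarrow> (\<exists>c\<in>cochain0 Y. \<forall>p. path_in W p \<longrightarrow> v p = cact c u p)"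

definition eps :: "'a set \<Rightarrow> ('a \<Rightarrow> real \<Rightarrow> 'a) \<Rightarrow> ((real \<Rightarrow> 'a) \<Rightarrow> 'g::group_add) \<Rightarrow> 'a \<Rightarrow> 'g" where
  "eps Y s z = (\<lambda>x. if x \<in> Y then z (s x) else 0)"

definition discrete_subset :: "'a::topological_space set \<Rightarrow> bool" where
  "discrete_subset Y \<longleftrightarrow> (\<forall>y\<in>Y. \<exists>U. open U \<and> U \<inter> Y = {y})"

end

theory Submission
  imports Defs
begin

text \<open>If \<open>z' = c \<bullet> z\<close> with \<open>c b = 1\<close>, then \<open>\<epsilon>\<^sub>s(z')(y) = \<epsilon>\<^sub>s(z)(y) c(y)\<^sup>-\<^sup>1\<close> for \<open>y \<in> Y\<close>,
  because \<open>s\<^sub>y\<close> runs from \<open>b\<close> to \<open>y\<close>. Hence \<open>\<epsilon>\<^sub>s(z') c = d \<epsilon>\<^sub>s(z)\<close>, where \<open>d\<close> is \<open>c\<close> off \<open>Y\<close>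
  and \<open>1\<close> on \<open>Y\<close>, so \<open>\<epsilon>\<^sub>s(z') \<bullet> z' = d \<bullet> (\<epsilon>\<^sub>s(z) \<bullet> z)\<close> with \<open>d \<in> C\<^sup>0(X,Y)\<close>.\<close>

lemma cact_cact: "cact c (cact d u) = cact (\<lambda>x. c x + d x) u"
  by (simp add: cact_def fun_eq_iff add.assoc minus_add del: add_uminus_conv_diff)

lemma cohomologous_cact:
  assumes "c \<in> cochain0 Y"
  shows "cohomologous W Y u (cact c u)"
  using assms unfolding cohomologous_def by blast

lemma cohomologous_cong:
  assumes "cohomologous W Y u v" and "\<And>p. path_in W p \<Longrightarrow> v p = v' p"
  shows "cohomologous W Y u v'"
  using assms unfolding cohomologous_def by metis

lemma eps_cact_add:
  assumes "c b = 0" and "\<And>y. y \<in> Y \<Longrightarrow> pathstart (s y) = b \<and> pathfinish (s y) = y"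
  shows "(\<lambda>x. eps Y s (cact c z) x + c x) = (\<lambda>x. (if x \<in> Y then 0 else c x) + eps Y s z x)"
  using assms by (auto simp: fun_eq_iff eps_def cact_def pathstart_def pathfinish_def add.assoc)

lemma cohomologous_eps_cact:
  assumes "c b = 0" and "\<And>y. y \<in> Y \<Longrightarrow> pathstart (s y) = b \<and> pathfinish (s y) = y"
  shows "cohomologous W Y (cact (eps Y s z) z) (cact (eps Y s (cact c z)) (cact c z))"
proof -
  define d where "d x = (if x \<in> Y then 0 else c x)" for x
  have "cact (eps Y s (cact c z)) (cact c z) = cact (\<lambda>x. eps Y s (cact c z) x + c x) z"
    by (rule cact_cact)
  also have "\<dots> = cact (\<lambda>x. d x + eps Y s z x) z"
    using eps_cact_add[of c b Y s, OF assms] by (simp add: d_def)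
  also have "\<dots> = cact d (cact (eps Y s z) z)"
    by (simp only: cact_cact)
  finally have "cact (eps Y s (cact c z)) (cact c z) = cact d (cact (eps Y s z) z)" .
  moreover have "d \<in> cochain0 Y"
    by (simp add: d_def cochain0_def)
  ultimately show ?thesis
    using cohomologous_cact[of d Y W] by simp
qed

theorem lemma6p7:
  fixes X Y :: "'a::topological_space set" and b :: 'a
    and s :: "'a \<Rightarrow> real \<Rightarrow> 'a"
    and z z' :: "(real \<Rightarrow> 'a) \<Rightarrow> 'g::group_add"
  assumes "path_connected X" and "Y \<subseteq> X" and "discrete_subset Y" and "b \<in> Y"
    and "\<And>y. y \<in> Y \<Longrightarrow> path_in X (s y) \<and> pathstart (s y) = b \<and> pathfinish (s y) = y"
    and "\<And>t. t \<in> {0..1} \<Longrightarrow> s b t = b"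
    and "cocycle1 X {b} z" and "cocycle1 X {b} z'"
    and "cohomologous X {b} z z'"
  shows "cohomologous X Y (cact (eps Y s z) z) (cact (eps Y s z') z')"
proof -
  obtain c where "c b = 0" and z': "\<And>p. path_in X p \<Longrightarrow> cact c z p = z' p"
    using assms(9) unfolding cohomologous_def cochain0_def by auto
  have "cohomologous X Y (cact (eps Y s z) z) (cact (eps Y s (cact c z)) (cact c z))"
    using cohomologous_eps_cact[of c b Y s] \<open>c b = 0\<close> assms(5) by blast
  moreover have "eps Y s (cact c z) = eps Y s z'"
    using z' assms(5) by (simp add: eps_def fun_eq_iff)
  ultimately show ?thesis
    using z' by (auto intro: cohomologous_cong simp: cact_def)
qed

end
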